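(* Let $\Psi$ be a reconstructor, let $\delta_1,\delta_2\ge0$ with corresponding data $y^{\delta_1},y^{\delta_2}\in\mathbb{R}^m$, and let $x\in\mathcal{X}$. Then $$\mathcal{J}_{\Psi,\delta_1}(x)\le 2\mathcal{J}_{\Psi,\delta_2}(x)+2\|y^{\delta_1}-y^{\delta_2}\|_2^2+\lambda\,\|w(\Psi(y^{\delta_1}))-w(\Psi(y^{\delta_2}))\|_1\,\|\,|Dx|\,\|_1,$$ where $\mathcal{J}_{\Psi,\delta}(x)=\|Kx-y^\delta\|_2^2+\lambda\|w(\Psi(y^\delta))\odot|Dx|\|_1$.
   Context: Let $K\in\mathbb{R}^{m\times n}$, and let $D_h,D_v\in\mathbb{R}^{n\times n}$ be the discrete horizontal and vertical difference operators; $|Dx|\in\mathbb{R}^n$, $(|Dx|)_i=\sqrt{(D_hx)_i^2+(D_vx)_i^2}$. $\mathcal{X}=\{x\in\mathbb{R}^n: x_i\ge 0\ \forall i\}$. Fix $\lambda>0$, $\eta>0$, $p\in(0,1)$, and for $\tilde x\in\mathbb{R}^n$ define $(w(\tilde{x}))_i=\big(\eta/\sqrt{\eta^2+(|D\tilde{x}|)_i^2}\big)^{1-p}$. A reconstructor is a Lipschitz continuous map $\Psi:\mathbb{R}^m\to\mathbb{R}^n$. For $\delta\ge0$, $y^\delta=Kx^{GT}+e$ with $x^{GT}\in\mathcal{X}$ and $\|e\|_2\le\delta$. $\odot$ is the entrywise product. *)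

theory Defs
  imports "HOL-Analysis.Analysis"
begin

definition gradmag :: "real^'n^'n \<Rightarrow> real^'n^'n \<Rightarrow> real^'n \<Rightarrow> real^'n" where
  "gradmag Dh Dv x = (\<chi> i. sqrt (((Dh *v x) $ i)^2 + ((Dv *v x) $ i)^2))"

definition nonneg_set :: "(real^'n) set" where
  "nonneg_set = {x. \<forall>i. x $ i \<ge> 0}"

definition weight :: "real \<Rightarrow> real \<Rightarrow> real^'n^'n \<Rightarrow> real^'n^'n \<Rightarrow> real^'n \<Rightarrow> real^'n" where
  "weight \<eta> p Dh Dv xt = (\<chi> i. (\<eta> / sqrt (\<eta>^2 + (gradmag Dh Dv xt $ i)^2)) powr (1 - p))"

definition norm1 :: "real^'n \<Rightarrow> real" where
  "norm1 v = (\<Sum>i\<in>UNIV. \<bar>v $ i\<bar>)"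

definition emult :: "real^'n \<Rightarrow> real^'n \<Rightarrow> real^'n" where
  "emult u v = (\<chi> i. u $ i * v $ i)"

definition reconstructor :: "(real^'m \<Rightarrow> real^'n) \<Rightarrow> bool" where
  "reconstructor \<Psi> \<longleftrightarrow> (\<exists>L. L > 0 \<and> L-lipschitz_on UNIV \<Psi>)"

definition Jfun :: "real^'n^'m \<Rightarrow> real^'n^'n \<Rightarrow> real^'n^'n \<Rightarrow> real \<Rightarrow> real \<Rightarrow> real
    \<Rightarrow> (real^'m \<Rightarrow> real^'n) \<Rightarrow> real^'m \<Rightarrow> real^'n \<Rightarrow> real" where
  "Jfun K Dh Dv lam \<eta> p \<Psi> y x =
     (norm (K *v x - y))^2 + lam * norm1 (emult (weight \<eta> p Dh Dv (\<Psi> y)) (gradmag Dh Dv x))"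

end

theory Submission
  imports Defs
begin

text \<open>The data term satisfies \<open>\<parallel>a - c\<parallel>\<^sup>2 \<le> 2\<parallel>a - b\<parallel>\<^sup>2 + 2\<parallel>b - c\<parallel>\<^sup>2\<close>, i.e. the triangle
  inequality followed by \<open>(s + t)\<^sup>2 \<le> 2s\<^sup>2 + 2t\<^sup>2\<close>. For the regulariser, split
  \<open>w\<^sub>1 = w\<^sub>2 + (w\<^sub>1 - w\<^sub>2)\<close>; the error term \<open>\<parallel>(w\<^sub>1 - w\<^sub>2) \<odot> |Dx|\<parallel>\<^sub>1\<close> is at most
  \<open>\<parallel>w\<^sub>1 - w\<^sub>2\<parallel>\<^sub>1 \<parallel>|Dx|\<parallel>\<^sub>1\<close> because the sup norm is dominated by the \<open>\<ell>\<^sub>1\<close> norm.\<close>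

lemma power2_sum_le_twice_sum_power2:
  fixes s t :: real
  shows "(s + t)\<^sup>2 \<le> 2 * s\<^sup>2 + 2 * t\<^sup>2"
proof -
  have "0 \<le> (s - t)\<^sup>2" by simp
  then show ?thesis by (simp add: power2_eq_square algebra_simps)
qed

lemma power2_norm_diff_le:
  fixes a b c :: "'a::real_normed_vector"
  shows "(norm (a - c))\<^sup>2 \<le> 2 * (norm (a - b))\<^sup>2 + 2 * (norm (b - c))\<^sup>2"
proof -
  have "norm (a - c) \<le> norm (a - b) + norm (b - c)"
    by (rule norm_diff_triangle_le[of a b _ c]) simp_all
  then have "(norm (a - c))\<^sup>2 \<le> (norm (a - b) + norm (b - c))\<^sup>2"
    by (simp add: power_mono)
  also have "\<dots> \<le> 2 * (norm (a - b))\<^sup>2 + 2 * (norm (b - c))\<^sup>2"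
    by (rule power2_sum_le_twice_sum_power2)
  finally show ?thesis .
qed

lemma norm1_nonneg: "0 \<le> norm1 v"
  unfolding norm1_def by (simp add: sum_nonneg)

lemma abs_component_le_norm1: "\<bar>v $ i\<bar> \<le> norm1 v"
  unfolding norm1_def by (rule member_le_sum) auto

lemma norm1_triangle: "norm1 (u + v) \<le> norm1 u + norm1 v"
  unfolding norm1_def by (simp add: sum.distrib[symmetric] sum_mono abs_triangle_ineq)

lemma emult_add_left: "emult (u + v) w = emult u w + emult v w"
  unfolding emult_def by (simp add: vec_eq_iff algebra_simps)

lemma norm1_emult_le: "norm1 (emult u v) \<le> norm1 u * norm1 v"
proof -
  have "norm1 (emult u v) = (\<Sum>i\<in>UNIV. \<bar>u $ i\<bar> * \<bar>v $ i\<bar>)"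
    unfolding norm1_def emult_def by (simp add: abs_mult)
  also have "\<dots> \<le> (\<Sum>i\<in>UNIV. \<bar>u $ i\<bar> * norm1 v)"
    by (intro sum_mono mult_left_mono abs_component_le_norm1) simp
  also have "\<dots> = norm1 u * norm1 v"
    unfolding norm1_def by (simp add: sum_distrib_right)
  finally show ?thesis .
qed

lemma norm1_emult_diff_le:
  "norm1 (emult u w) \<le> norm1 (emult v w) + norm1 (u - v) * norm1 w"
proof -
  have "norm1 (emult u w) = norm1 (emult v w + emult (u - v) w)"
    by (simp flip: emult_add_left)
  also have "\<dots> \<le> norm1 (emult v w) + norm1 (emult (u - v) w)"
    by (rule norm1_triangle)
  also have "\<dots> \<le> norm1 (emult v w) + norm1 (u - v) * norm1 w"
    by (simp add: norm1_emult_le)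
  finally show ?thesis .
qed

theorem lemma7:
  fixes K :: "real^'n^'m" and Dh Dv :: "real^'n^'n"
    and lam \<eta> p \<delta>1 \<delta>2 :: real
    and \<Psi> :: "real^'m \<Rightarrow> real^'n"
    and xgt1 xgt2 x :: "real^'n" and e1 e2 y1 y2 :: "real^'m"
  assumes "lam > 0" and "\<eta> > 0" and "0 < p" and "p < 1"
    and "reconstructor \<Psi>"
    and "\<delta>1 \<ge> 0" and "\<delta>2 \<ge> 0"
    and "xgt1 \<in> nonneg_set" and "xgt2 \<in> nonneg_set"
    and "norm e1 \<le> \<delta>1" and "norm e2 \<le> \<delta>2"
    and "y1 = K *v xgt1 + e1" and "y2 = K *v xgt2 + e2"
    and "x \<in> nonneg_set"
  shows "Jfun K Dh Dv lam \<eta> p \<Psi> y1 x \<le>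
           2 * Jfun K Dh Dv lam \<eta> p \<Psi> y2 x + 2 * (norm (y1 - y2))^2
           + lam * norm1 (weight \<eta> p Dh Dv (\<Psi> y1) - weight \<eta> p Dh Dv (\<Psi> y2))
               * norm1 (gradmag Dh Dv x)"
proof -
  define w1 where "w1 = weight \<eta> p Dh Dv (\<Psi> y1)"
  define w2 where "w2 = weight \<eta> p Dh Dv (\<Psi> y2)"
  define g where "g = gradmag Dh Dv x"
  have data: "(norm (K *v x - y1))\<^sup>2 \<le> 2 * (norm (K *v x - y2))\<^sup>2 + 2 * (norm (y1 - y2))\<^sup>2"
    using power2_norm_diff_le[of "K *v x" y1 y2] by (simp add: norm_minus_commute)
  have "lam * norm1 (emult w1 g) \<le> lam * (norm1 (emult w2 g) + norm1 (w1 - w2) * norm1 g)"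
    using \<open>lam > 0\<close> by (simp add: norm1_emult_diff_le)
  also have "\<dots> \<le> 2 * (lam * norm1 (emult w2 g)) + lam * norm1 (w1 - w2) * norm1 g"
    using \<open>lam > 0\<close> norm1_nonneg[of "emult w2 g"] by (simp add: algebra_simps)
  finally have regulariser:
    "lam * norm1 (emult w1 g) \<le> 2 * (lam * norm1 (emult w2 g)) + lam * norm1 (w1 - w2) * norm1 g" .
  from data regulariser show ?thesis
    unfolding Jfun_def w1_def[symmetric] w2_def[symmetric] g_def[symmetric] by simp
qed

end
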